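(* Let $n\ge2$, $L>1$, let $\sigma_{1,1}$ be as below, and define $f_{1,1}:[1,\infty)\to\mathbb{R}$ by $f_{1,1}(r)=r+\frac{1+\sigma_{1,1}}{n-1-\sigma_{1,1}}\,r^{-(n-1)}$. Define $F,G:[1,\infty)\to\mathbb{R}$ by $$F(r)=(f_{1,1}'(r))^2+\frac{n-1}{r^2}f_{1,1}(r)^2,\qquad G(r)=2f_{1,1}(r)f_{1,1}'(r)+\frac{n-1}{r}f_{1,1}(r)^2.$$ Then $F$ is a decreasing function of $r$ and $G$ is an increasing function of $r$ on $[1,\infty)$.
   Context: $\sigma_{1,1}$ is the smaller root of $\tilde A\sigma^2+\tilde B\sigma+\tilde C=0$ with $\tilde A=L(L^n-1)$, $\tilde B=-\{L^n+(n-1)L^{n+1}+L+n-1\}$, $\tilde C=(n-1)(L^n-1)$; it is the first nonzero Steklov eigenvalue of the annulus $\{x\in\mathbb{R}^n:1<|x|<L\}$. *)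

theory Defs
  imports "HOL-Analysis.Analysis"
begin

definition tA :: "nat \<Rightarrow> real \<Rightarrow> real" where
  "tA n L = L * (L ^ n - 1)"
definition tB :: "nat \<Rightarrow> real \<Rightarrow> real" where
  "tB n L = - (L ^ n + (real n - 1) * L ^ (n + 1) + L + (real n - 1))"
definition tC :: "nat \<Rightarrow> real \<Rightarrow> real" where
  "tC n L = (real n - 1) * (L ^ n - 1)"

definition sigma11 :: "nat \<Rightarrow> real \<Rightarrow> real" where
  "sigma11 n L = Min {s. tA n L * s ^ 2 + tB n L * s + tC n L = 0}"

definition f11 :: "nat \<Rightarrow> real \<Rightarrow> real \<Rightarrow> real" where
  "f11 n L r = r + (1 + sigma11 n L) / (real n - 1 - sigma11 n L) * inverse (r ^ (n - 1))"

definition F11 :: "nat \<Rightarrow> real \<Rightarrow> real \<Rightarrow> real" where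
  "F11 n L r = (deriv (f11 n L) r) ^ 2 + (real n - 1) / r ^ 2 * (f11 n L r) ^ 2"

definition G11 :: "nat \<Rightarrow> real \<Rightarrow> real \<Rightarrow> real" where
  "G11 n L r = 2 * f11 n L r * deriv (f11 n L) r + (real n - 1) / r * (f11 n L r) ^ 2"

end

theory Submission
  imports Defs "HOL-Library.Quadratic_Discriminant"
begin

text \<open>
  The quadratic defining \<open>\<sigma>\<^sub>1\<^sub>,\<^sub>1\<close> is positive on \<open>(-\<infinity>,0]\<close> and negative
  at 1, so \<open>0 < \<sigma>\<^sub>1\<^sub>,\<^sub>1 < 1\<close> and \<open>f\<^sub>1\<^sub>,\<^sub>1(r) = r + c r\<^sup>-\<^sup>k\<close> with
  \<open>k = n - 1 \<ge> 1\<close> and \<open>c > 0\<close>. For any such function one computes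
  \<open>F(r) = (k+1) + k(k+1) c\<^sup>2 r\<^sup>-\<^sup>2\<^sup>k\<^sup>-\<^sup>2\<close>, decreasing as soon as \<open>c \<noteq> 0\<close>, and
  \<open>G(r) = (k+2) r + 2 c r\<^sup>-\<^sup>k - k c\<^sup>2 r\<^sup>-\<^sup>2\<^sup>k\<^sup>-\<^sup>1\<close>, whose derivative
  \<open>(k+2) - 2k x + k(2k+1) x\<^sup>2\<close>, \<open>x = c r\<^sup>-\<^sup>k\<^sup>-\<^sup>1\<close>, is a positive definite quadratic in \<open>x\<close>.
\<close>

lemma Min_quadratic_roots_in_unit_interval:
  fixes a b c :: real
  assumes "a > 0" "c > 0" "a + b + c < 0"
  shows "Min {s. a * s\<^sup>2 + b * s + c = 0} \<in> {0<..<1}"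
proof -
  define p where "p s = a * s\<^sup>2 + b * s + c" for s
  define S where "S = {s. p s = 0}"
  have "continuous_on {0..1} p"
    unfolding p_def by (intro continuous_intros)
  then obtain x where x: "0 \<le> x" "x \<le> 1" "p x = 0"
    using IVT2'[of p 1 0 0] assms by (force simp: p_def)
  have "x \<noteq> 1"
    using x assms by (auto simp: p_def)
  have "S \<subseteq> {(- b + sqrt (discrim a b c)) / (2 * a), (- b - sqrt (discrim a b c)) / (2 * a)}"
    using discriminant_iff[of a] assms by (auto simp: S_def p_def)
  then have "finite S"
    by (rule finite_subset) simp
  moreover have "x \<in> S"
    using x by (simp add: S_def)
  ultimately have "Min S \<in> S" "Min S \<le> x"
    by (auto intro: Min_in Min_le)
  moreover have "s > 0" if "s \<in> S" for s
  proof (rule ccontr)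
    assume "\<not> s > 0"
    then have "b * s \<ge> 0"
      using assms by (intro mult_nonpos_nonpos) auto
    then have "p s > 0"
      using assms by (simp add: p_def add_nonneg_pos)
    then show False
      using that by (simp add: S_def)
  qed
  ultimately show ?thesis
    using x \<open>x \<noteq> 1\<close> by (auto simp: S_def p_def)
qed

lemma sigma11_bounds:
  assumes "n \<ge> 2" "L > 1"
  shows "0 < sigma11 n L" "sigma11 n L < 1"
proof -
  have "L ^ n > 1"
    using assms by (simp add: one_less_power)
  then have A: "tA n L > 0" and C: "tC n L > 0"
    using assms by (auto simp: tA_def tC_def)
  have "(real n - 2) * L ^ n * (L - 1) \<ge> 0"
    using assms by simp
  then have "tA n L + tB n L + tC n L < 0"
    using assms by (simp add: tA_def tB_def tC_def algebra_simps)
  then show "0 < sigma11 n L" "sigma11 n L < 1"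
    using A C Min_quadratic_roots_in_unit_interval unfolding sigma11_def by auto
qed

lemma has_real_derivative_inverse_power:
  fixes r :: real
  assumes "r \<noteq> 0"
  shows "((\<lambda>r. inverse (r ^ m)) has_real_derivative - m / r ^ (m + 1)) (at r)"
proof -
  have "inverse (r ^ m) * (m * r ^ (m - 1)) * inverse (r ^ m) = m / r ^ (m + 1)"
    using assms by (cases m) (simp_all add: field_simps)
  moreover have "((\<lambda>r. inverse (r ^ m)) has_real_derivative
                   - (inverse (r ^ m) * (m * r ^ (m - 1)) * inverse (r ^ m))) (at r)"
    using assms by (auto intro!: derivative_eq_intros)
  ultimately show ?thesis
    by simp
qed

text \<open>
  With \<open>k = n - 1\<close> these are the radial factors \<open>f\<close> of the harmonic functions
  \<open>f(|x|) x\<^sub>1 / |x|\<close> on \<open>\<real>\<^sup>n - {0}\<close>.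
\<close>
definition radial_harmonic :: "nat \<Rightarrow> real \<Rightarrow> real \<Rightarrow> real" where
  "radial_harmonic k c r = r + c * inverse (r ^ k)"

lemma deriv_radial_harmonic:
  fixes r :: real
  assumes "r \<noteq> 0"
  shows "deriv (radial_harmonic k c) r = 1 - k * c / r ^ (k + 1)"
proof (rule DERIV_imp_deriv)
  have "(radial_harmonic k c has_real_derivative 1 + c * (- real k / r ^ (k + 1))) (at r)"
    unfolding radial_harmonic_def
    by (intro DERIV_add DERIV_ident DERIV_cmult has_real_derivative_inverse_power assms)
  then show "(radial_harmonic k c has_real_derivative 1 - k * c / r ^ (k + 1)) (at r)"
    by (simp add: mult.commute)
qed

lemma radial_harmonic_F_eq:
  fixes r :: real
  assumes "r \<noteq> 0"
  shows "(deriv (radial_harmonic k c) r)\<^sup>2 + k / r\<^sup>2 * (radial_harmonic k c r)\<^sup>2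
           = (k + 1) + k * (k + 1) * c\<^sup>2 / r ^ (2 * k + 2)"
proof -
  have "r ^ (k + 1) = r * r ^ k" "r ^ (2 * k + 2) = (r * r ^ k)\<^sup>2"
    by (simp_all add: power2_eq_square power_add mult_2)
  moreover have "r ^ k \<noteq> 0"
    using assms by simp
  ultimately show ?thesis
    using assms by (simp add: deriv_radial_harmonic radial_harmonic_def field_simps power2_eq_square)
qed

lemma radial_harmonic_G_eq:
  fixes r :: real
  assumes "r \<noteq> 0"
  shows "2 * radial_harmonic k c r * deriv (radial_harmonic k c) r + k / r * (radial_harmonic k c r)\<^sup>2
           = (k + 2) * r + 2 * c * inverse (r ^ k) - k * c\<^sup>2 * inverse (r ^ (2 * k + 1))"
proof -
  have "r ^ (k + 1) = r * r ^ k" "r ^ (2 * k + 1) = r * (r ^ k)\<^sup>2"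
    by (simp_all add: power2_eq_square power_add mult_2)
  moreover have "r ^ k \<noteq> 0"
    using assms by simp
  ultimately show ?thesis
    using assms by (simp add: deriv_radial_harmonic radial_harmonic_def field_simps power2_eq_square)
qed

lemma radial_harmonic_F_strict_decreasing:
  fixes r s :: real
  assumes "k \<ge> 1" "c \<noteq> 0" "0 < r" "r < s"
  shows "(deriv (radial_harmonic k c) s)\<^sup>2 + k / s\<^sup>2 * (radial_harmonic k c s)\<^sup>2
           < (deriv (radial_harmonic k c) r)\<^sup>2 + k / r\<^sup>2 * (radial_harmonic k c r)\<^sup>2"
proof -
  have "r \<noteq> 0" "s \<noteq> 0"
    using assms by auto
  have "k * (real k + 1) * c\<^sup>2 / s ^ (2 * k + 2) < k * (real k + 1) * c\<^sup>2 / r ^ (2 * k + 2)"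
    using assms by (intro divide_strict_left_mono power_strict_mono mult_pos_pos) auto
  then show ?thesis
    unfolding radial_harmonic_F_eq[OF \<open>r \<noteq> 0\<close>] radial_harmonic_F_eq[OF \<open>s \<noteq> 0\<close>] by simp
qed

lemma radial_harmonic_G_strict_increasing:
  fixes r s :: real
  assumes "0 < r" "r < s"
  shows "2 * radial_harmonic k c r * deriv (radial_harmonic k c) r + k / r * (radial_harmonic k c r)\<^sup>2
           < 2 * radial_harmonic k c s * deriv (radial_harmonic k c) s + k / s * (radial_harmonic k c s)\<^sup>2"
proof -
  have "r \<noteq> 0" "s \<noteq> 0"
    using assms by auto
  define g where "g u = (real k + 2) * u + 2 * c * inverse (u ^ k) - k * c\<^sup>2 * inverse (u ^ (2 * k + 1))"
    for u :: real
  have "g r < g s"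
  proof (rule DERIV_pos_imp_increasing[OF assms(2)])
    fix t :: real
    assume "r \<le> t" "t \<le> s"
    then have "t \<noteq> 0"
      using assms by simp
    define x where "x = c / t ^ (k + 1)"
    have "(g has_real_derivative
            (real k + 2) * 1 + 2 * c * (- real k / t ^ (k + 1))
              - k * c\<^sup>2 * (- real (2 * k + 1) / t ^ (2 * k + 1 + 1))) (at t)"
      unfolding g_def
      by (intro DERIV_add DERIV_diff DERIV_ident DERIV_cmult has_real_derivative_inverse_power \<open>t \<noteq> 0\<close>)
    also have "(real k + 2) * 1 + 2 * c * (- real k / t ^ (k + 1))
                 - k * c\<^sup>2 * (- real (2 * k + 1) / t ^ (2 * k + 1 + 1))
               = (real k + 2) - 2 * k * x + k * (2 * k + 1) * x\<^sup>2"
    proof -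
      have "t ^ (2 * k + 1 + 1) = (t ^ (k + 1))\<^sup>2"
        by (simp add: power2_eq_square power_add mult_2)
      with \<open>t \<noteq> 0\<close> show ?thesis
        by (simp add: x_def power_divide field_simps)
    qed
    finally have "(g has_real_derivative (real k + 2) - 2 * k * x + k * (2 * k + 1) * x\<^sup>2) (at t)" .
    moreover have "(real k + 2) - 2 * k * x + k * (2 * k + 1) * x\<^sup>2 > 0"
    proof -
      have "(2 * k + 1) * ((real k + 2) - 2 * k * x + k * (2 * k + 1) * x\<^sup>2)
              = k * ((2 * k + 1) * x - 1)\<^sup>2 + 2 * (k + 1)\<^sup>2"
        by (simp add: algebra_simps power2_eq_square)
      then have "(2 * k + 1) * ((real k + 2) - 2 * k * x + k * (2 * k + 1) * x\<^sup>2) > 0"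
        by (simp add: add_nonneg_pos)
      then show ?thesis
        by (simp add: zero_less_mult_iff)
    qed
    ultimately show "\<exists>y. (g has_real_derivative y) (at t) \<and> y > 0"
      by blast
  qed
  then show ?thesis
    unfolding g_def radial_harmonic_G_eq[OF \<open>r \<noteq> 0\<close>] radial_harmonic_G_eq[OF \<open>s \<noteq> 0\<close>] .
qed

theorem lemma3p1:
  fixes n :: nat and L :: real
  assumes "n \<ge> 2" and "L > 1"
  shows "(\<forall>r s. 1 \<le> r \<longrightarrow> r < s \<longrightarrow> F11 n L s < F11 n L r) \<and>
         (\<forall>r s. 1 \<le> r \<longrightarrow> r < s \<longrightarrow> G11 n L r < G11 n L s)"
proof -
  define c where "c = (1 + sigma11 n L) / (real n - 1 - sigma11 n L)"
  have "c > 0"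
    using sigma11_bounds[OF assms] assms unfolding c_def by (intro divide_pos_pos) auto
  have "real (n - 1) = real n - 1"
    using assms by simp
  then have "F11 n L r = (deriv (radial_harmonic (n - 1) c) r)\<^sup>2
                           + (n - 1) / r\<^sup>2 * (radial_harmonic (n - 1) c r)\<^sup>2"
    and "G11 n L r = 2 * radial_harmonic (n - 1) c r * deriv (radial_harmonic (n - 1) c) r
                       + (n - 1) / r * (radial_harmonic (n - 1) c r)\<^sup>2" for r
    unfolding F11_def G11_def f11_def radial_harmonic_def c_def by simp_all
  with \<open>c > 0\<close> assms show ?thesis
    using radial_harmonic_F_strict_decreasing[of "n - 1" c] radial_harmonic_G_strict_increasing[of _ _ "n - 1" c]
    by auto
qed

end
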